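(* Let $(\approx^n_1,\approx^n_2)$ be call-by-name coupled logical bisimilarity. (1) If $M\approx^n_1 N$ then $C[M]\approx^n_1 C[N]$ for every context $C$ such that $C[M],C[N]$ are closed. (2) If $E\approx^n_2 F$ then $\mathcal{E}[E]\approx^n_2\mathcal{E}[F]$ for every call-by-name evaluation context $\mathcal{E}$.
   Context: $\Lambda^\bullet$ is the set of closed $\lambda$-terms. Contexts are generated by $C::=x\mid[\cdot]\mid C\,C\mid\lambda x.C$, possibly with several holes numbered left to right; $C[\widetilde M]$ fills the $i$-th hole with $M_i$; $C[M]$ fills every hole with $M$. For $\mathcal{R}\subseteq\Lambda^\bullet\times\Lambda^\bullet$, $\mathcal{R}^\star=\{(C[\widetilde M],C[\widetilde N]) : C\text{ a context},\ M_i\,\mathcal{R}\,N_i\ \forall i,\ C[\widetilde M],C[\widetilde N]\in\Lambda^\bullet\}$. Call-by-name evaluation contexts: $\mathcal{E}::=[\cdot]\mid\mathcal{E}\,M$ with $M\in\Lambda^\bullet$. Call-by-name reduction on closed terms: $MN\longrightarrow M'N$ if $M\longrightarrow M'$, and $(\lambda x.P)N\longrightarrow P[N/x]$; $\Longrightarrow$ is its reflexive transitive closure. A coupled relation is a pair $(\mathcal{R}_1,\mathcal{R}_2)$ of relations on $\Lambda^\bullet$ with $\mathcal{R}_1\subseteq\mathcal{R}_2$. It is a (call-by-name) coupled logical bisimulation if whenever $M\,\mathcal{R}_2\,N$: (1) if $M\longrightarrow M'$ then there is $N'$ with $N\Longrightarrow N'$ and $M'\,\mathcal{R}_2\,N'$;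 (2) if $M=\lambda x.M'$ then $N\Longrightarrow\lambda x.N'$ for some $N'$ and for all $P,Q\in\Lambda^\bullet$ with $P\,\mathcal{R}_1^\star\,Q$, $M'[P/x]\,\mathcal{R}_2\,N'[Q/x]$; (3) the converses of (1),(2) with $M$ and $N$ exchanged. Coupled logical bisimilarity $(\approx^n_1,\approx^n_2)$ is the componentwise union of all such bisimulations. *)

theory Defs
  imports Main
begin

datatype tm = Var nat | App tm tm | Lam tm

fun bnd :: "nat \<Rightarrow> tm \<Rightarrow> bool" where
  "bnd k (Var i) = (i < k)"
| "bnd k (App s t) = (bnd k s \<and> bnd k t)"
| "bnd k (Lam t) = bnd (Suc k) t"

definition closed :: "tm \<Rightarrow> bool" where
  "closed t = bnd 0 t"

fun lift :: "nat \<Rightarrow> tm \<Rightarrow> tm" where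
  "lift k (Var i) = (if i < k then Var i else Var (Suc i))"
| "lift k (App s t) = App (lift k s) (lift k t)"
| "lift k (Lam t) = Lam (lift (Suc k) t)"

text \<open>subst t k s: replace index k in t by s (capture-avoiding, indices above k decremented)\<close>
fun subst :: "tm \<Rightarrow> nat \<Rightarrow> tm \<Rightarrow> tm" where
  "subst (Var i) k s = (if i < k then Var i else if i = k then s else Var (i - 1))"
| "subst (App t u) k s = App (subst t k s) (subst u k s)"
| "subst (Lam t) k s = Lam (subst t (Suc k) (lift 0 s))"

inductive cbn :: "tm \<Rightarrow> tm \<Rightarrow> bool" where
  beta: "cbn (App (Lam P) N) (subst P 0 N)"
| appL: "cbn M M' \<Longrightarrow> cbn (App M N) (App M' N)"

abbreviation cbn_star :: "tm \<Rightarrow> tm \<Rightarrow> bool" where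
  "cbn_star \<equiv> cbn\<^sup>*\<^sup>*"

datatype ctx = CVar nat | Hole | CApp ctx ctx | CLam ctx

fun nholes :: "ctx \<Rightarrow> nat" where
  "nholes (CVar i) = 0"
| "nholes Hole = 1"
| "nholes (CApp C D) = nholes C + nholes D"
| "nholes (CLam C) = nholes C"

text \<open>fill C Ms fills the i-th hole (left to right) with Ms!i (no shifting: closed terms are plugged)\<close>
fun fill :: "ctx \<Rightarrow> tm list \<Rightarrow> tm" where
  "fill (CVar i) Ms = Var i"
| "fill Hole Ms = hd Ms"
| "fill (CApp C D) Ms = App (fill C (take (nholes C) Ms)) (fill D (drop (nholes C) Ms))"
| "fill (CLam C) Ms = Lam (fill C Ms)"

definition fill_all :: "ctx \<Rightarrow> tm \<Rightarrow> tm" where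
  "fill_all C M = fill C (replicate (nholes C) M)"

definition ctx_closure :: "(tm \<times> tm) set \<Rightarrow> (tm \<times> tm) set" where
  "ctx_closure R = {(fill C Ms, fill C Ns) | C Ms Ns.
      length Ms = nholes C \<and> length Ns = nholes C \<and>
      (\<forall>i < nholes C. (Ms ! i, Ns ! i) \<in> R) \<and>
      closed (fill C Ms) \<and> closed (fill C Ns)}"

text \<open>An evaluation context is the list of closed arguments [M1,...,Mk]: E[T] = T M1 ... Mk\<close>
definition efill :: "tm list \<Rightarrow> tm \<Rightarrow> tm" where
  "efill Ms T = foldl App T Ms"

definition closed_rel :: "(tm \<times> tm) set \<Rightarrow> bool" where
  "closed_rel R \<longleftrightarrow> (\<forall>(M, N) \<in> R. closed M \<and> closed N)"

definition lb_progress :: "(tm \<times> tm) set \<Rightarrow> (tm \<times> tm) set \<Rightarrow> tm \<Rightarrow> tm \<Rightarrow> bool" where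
  "lb_progress R1 R2 M N \<longleftrightarrow>
     (\<forall>M'. cbn M M' \<longrightarrow> (\<exists>N'. cbn_star N N' \<and> (M', N') \<in> R2)) \<and>
     (\<forall>M'. M = Lam M' \<longrightarrow> (\<exists>N'. cbn_star N (Lam N') \<and>
         (\<forall>P Q. (P, Q) \<in> ctx_closure R1 \<longrightarrow> (subst M' 0 P, subst N' 0 Q) \<in> R2)))"

definition coupled_lb :: "(tm \<times> tm) set \<Rightarrow> (tm \<times> tm) set \<Rightarrow> bool" where
  "coupled_lb R1 R2 \<longleftrightarrow> closed_rel R1 \<and> closed_rel R2 \<and> R1 \<subseteq> R2 \<and>
     (\<forall>(M, N) \<in> R2. lb_progress R1 R2 M N \<and> lb_progress (R1\<inverse>) (R2\<inverse>) N M)"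

definition bisim1 :: "(tm \<times> tm) set" where
  "bisim1 = \<Union>{R1. \<exists>R2. coupled_lb R1 R2}"

definition bisim2 :: "(tm \<times> tm) set" where
  "bisim2 = \<Union>{R2. \<exists>R1. coupled_lb R1 R2}"

end

theory Submission
  imports Defs
begin

text \<open>
  Given a coupled logical
  bisimulation (R1, R2), let S = \<open>ctx_closure R1\<close> be the closed context closure of R1 and
  let G = \<open>up_to_ctx R1 R2\<close> be the closure of R2 \<union> S under call-by-name evaluation contexts
  whose arguments are pairwise related by S.  Then (S, G) is again a coupled logical
  bisimulation (\<open>coupled_lb_up_to_ctx\<close>), and both claims of the theorem follow at once:
  C[M] S C[N] whenever M R1 N, and E[E'] G E[F'] whenever E' R2 F'.

  The central lemma \<open>lb_progress_efill\<close> lifts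
  the progress of a pair (X, Y) to progress of (E[X], E'[Y]); an induction over the context
  closure then yields progress for all of G, and the converse direction follows by symmetry.
\<close>

lemma bnd_mono: "bnd j M \<Longrightarrow> j \<le> k \<Longrightarrow> bnd k M"
  by (induction M arbitrary: j k) auto

lemma lift_bnd: "bnd k M \<Longrightarrow> lift k M = M"
  by (induction M arbitrary: k) auto

lemma lift_closed: "closed M \<Longrightarrow> lift 0 M = M"
  by (simp add: closed_def lift_bnd)

lemma subst_bnd: "bnd k M \<Longrightarrow> subst M k P = M"
  by (induction M arbitrary: k P) auto

lemma subst_closed: "closed M \<Longrightarrow> subst M k P = M"
  using subst_bnd bnd_mono by (auto simp: closed_def)

lemma bnd_subst: "bnd (Suc k) M \<Longrightarrow> closed P \<Longrightarrow> bnd k (subst M k P)"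
proof (induction M arbitrary: k)
  case (Var i)
  then show ?case using bnd_mono[of 0 P k] by (auto simp: closed_def)
qed (auto simp: lift_closed)

lemma closed_subst: "closed (Lam M) \<Longrightarrow> closed P \<Longrightarrow> closed (subst M 0 P)"
  using bnd_subst[of 0 M P] by (simp add: closed_def)

text \<open>\<open>ctx_related R M N\<close>: M and N are obtained from one (possibly open) context by
  filling its holes with pairwise R-related terms.\<close>
inductive ctx_related :: "(tm \<times> tm) set \<Rightarrow> tm \<Rightarrow> tm \<Rightarrow> bool" for R where
  var: "ctx_related R (Var i) (Var i)"
| rel: "(M, N) \<in> R \<Longrightarrow> ctx_related R M N"
| app: "ctx_related R A B \<Longrightarrow> ctx_related R A' B' \<Longrightarrow> ctx_related R (App A A') (App B B')"
| lam: "ctx_related R A B \<Longrightarrow> ctx_related R (Lam A) (Lam B)"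

lemma ctx_related_refl: "ctx_related R M M"
  by (induction M) (auto intro: ctx_related.intros)

lemma ctx_related_converse: "ctx_related (R\<inverse>) A B \<longleftrightarrow> ctx_related R B A"
proof -
  have "ctx_related S M N \<Longrightarrow> ctx_related (S\<inverse>) N M" for S M N
    by (induction rule: ctx_related.induct) (auto intro: ctx_related.intros)
  from this[of "R\<inverse>" A B] this[of R B A] show ?thesis by auto
qed

lemma ctx_related_fill:
  assumes "length Ms = nholes C" "length Ns = nholes C" "\<forall>i<nholes C. (Ms!i, Ns!i) \<in> R"
  shows "ctx_related R (fill C Ms) (fill C Ns)"
  using assms
proof (induction C arbitrary: Ms Ns)
  case Hole
  then show ?case by (auto simp: length_Suc_conv intro: ctx_related.intros)
next
  case (CApp C D)
  then have "ctx_related R (fill C (take (nholes C) Ms)) (fill C (take (nholes C) Ns))"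
    and "ctx_related R (fill D (drop (nholes C) Ms)) (fill D (drop (nholes C) Ns))"
    by (auto intro!: CApp.IH)
  then show ?case by (auto intro: ctx_related.intros)
qed (auto intro: ctx_related.intros)

lemma ctx_related_obtain_fill:
  assumes "ctx_related R A B"
  shows "\<exists>C Ms Ns. A = fill C Ms \<and> B = fill C Ns \<and> length Ms = nholes C \<and>
           length Ns = nholes C \<and> (\<forall>i<nholes C. (Ms!i, Ns!i) \<in> R)"
  using assms
proof (induction rule: ctx_related.induct)
  case (var i)
  show ?case by (intro exI[of _ "CVar i"] exI[of _ "[]"]) auto
next
  case (rel M N)
  show ?case by (intro exI[of _ Hole] exI[of _ "[M]"] exI[of _ "[N]"]) (use rel in auto)
next
  case (app A B A' B')
  then obtain C Ms Ns D Ms' Ns' where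
    "A = fill C Ms" "B = fill C Ns" "length Ms = nholes C" "length Ns = nholes C"
    "\<forall>i<nholes C. (Ms!i, Ns!i) \<in> R"
    "A' = fill D Ms'" "B' = fill D Ns'" "length Ms' = nholes D" "length Ns' = nholes D"
    "\<forall>i<nholes D. (Ms'!i, Ns'!i) \<in> R"
    by blast
  then show ?case
    by (intro exI[of _ "CApp C D"] exI[of _ "Ms @ Ms'"] exI[of _ "Ns @ Ns'"])
       (auto simp: nth_append)
next
  case (lam A B)
  then show ?case by (metis fill.simps(4) nholes.simps(4))
qed

lemma ctx_closure_iff: "(M, N) \<in> ctx_closure R \<longleftrightarrow> ctx_related R M N \<and> closed M \<and> closed N"
proof
  assume "(M, N) \<in> ctx_closure R"
  then show "ctx_related R M N \<and> closed M \<and> closed N"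
    unfolding ctx_closure_def using ctx_related_fill by auto
next
  assume "ctx_related R M N \<and> closed M \<and> closed N"
  with ctx_related_obtain_fill[of R M N] show "(M, N) \<in> ctx_closure R"
    unfolding ctx_closure_def by auto
qed

lemma ctx_closure_converse: "ctx_closure (R\<inverse>) = (ctx_closure R)\<inverse>"
  by (auto simp: ctx_closure_iff ctx_related_converse)

lemma closed_rel_ctx_closure: "closed_rel (ctx_closure R)"
  by (auto simp: closed_rel_def ctx_closure_iff)

lemma ctx_closure_idem: "ctx_closure (ctx_closure R) \<subseteq> ctx_closure R"
proof -
  have "ctx_related (ctx_closure R) A B \<Longrightarrow> ctx_related R A B" for A B
    by (induction rule: ctx_related.induct) (auto simp: ctx_closure_iff intro: ctx_related.intros)
  then show ?thesis by (auto simp: ctx_closure_iff)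
qed

text \<open>Substitutivity: substituting related closed terms into related terms gives related
  terms.  The terms in R are closed, so substitution leaves the filled holes unchanged.\<close>
lemma ctx_related_subst:
  assumes "closed_rel R" "ctx_related R A B" "ctx_related R P Q" "closed P" "closed Q"
  shows "ctx_related R (subst A k P) (subst B k Q)"
  using assms(2)
proof (induction arbitrary: k rule: ctx_related.induct)
  case (rel M N)
  then have "closed M" "closed N" using assms(1) by (auto simp: closed_rel_def)
  then show ?case using rel by (simp add: subst_closed ctx_related.rel)
qed (use assms in \<open>auto simp: lift_closed intro: ctx_related.intros\<close>)

lemma ctx_closure_subst:
  assumes "closed_rel R" "ctx_related R A B" "closed (Lam A)" "closed (Lam B)"
    and "(P, Q) \<in> ctx_closure R"
  shows "(subst A 0 P, subst B 0 Q) \<in> ctx_closure R"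
  using assms ctx_related_subst closed_subst by (auto simp: ctx_closure_iff)

lemma efill_Nil [simp]: "efill [] X = X"
  by (simp add: efill_def)

lemma efill_Cons: "efill (D # Ds) X = efill Ds (App X D)"
  by (simp add: efill_def)

lemma efill_snoc: "efill (Ds @ [D]) X = App (efill Ds X) D"
  by (simp add: efill_def)

lemma efill_Lam: "efill Ds X = Lam M \<Longrightarrow> Ds = [] \<and> X = Lam M"
  by (cases Ds rule: rev_cases) (auto simp: efill_snoc)

lemma closed_efill: "closed X \<Longrightarrow> \<forall>D\<in>set Ds. closed D \<Longrightarrow> closed (efill Ds X)"
  by (induction Ds arbitrary: X) (auto simp: efill_Cons closed_def)

lemma cbn_efill: "cbn X X' \<Longrightarrow> cbn (efill Ds X) (efill Ds X')"
  by (induction Ds arbitrary: X X') (auto simp: efill_Cons intro: cbn.appL)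

lemma cbn_star_efill: "cbn_star X X' \<Longrightarrow> cbn_star (efill Ds X) (efill Ds X')"
  by (induction rule: rtranclp_induct) (auto intro: rtranclp.rtrancl_into_rtrancl cbn_efill)

lemma cbn_star_efill_beta:
  "cbn_star Y (Lam N) \<Longrightarrow> cbn_star (efill (E # Es) Y) (efill Es (subst N 0 E))"
proof -
  assume "cbn_star Y (Lam N)"
  then have "cbn_star (efill (E # Es) Y) (efill Es (App (Lam N) E))"
    using cbn_star_efill[of Y "Lam N" "E # Es"] by (simp add: efill_Cons)
  moreover have "cbn (efill Es (App (Lam N) E)) (efill Es (subst N 0 E))"
    by (intro cbn_efill cbn.beta)
  ultimately show ?thesis by simp
qed

lemma cbn_efill_inv:
  "cbn (efill Ds X) Z \<Longrightarrow> (\<exists>X'. cbn X X' \<and> Z = efill Ds X') \<or>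
     (\<exists>M D Ds'. Ds = D # Ds' \<and> X = Lam M \<and> Z = efill Ds' (subst M 0 D))"
proof (induction Ds arbitrary: X)
  case (Cons D Ds)
  then have "(\<exists>X'. cbn (App X D) X' \<and> Z = efill Ds X') \<or> (\<exists>M. App X D = Lam M)"
    by (auto simp: efill_Cons)
  then show ?case
    by (auto simp: efill_Cons elim: cbn.cases)
qed auto

definition eval_closure :: "(tm \<times> tm) set \<Rightarrow> (tm \<times> tm) set \<Rightarrow> (tm \<times> tm) set" where
  "eval_closure S T = {(efill Ds X, efill Es Y) | Ds Es X Y.
      (X, Y) \<in> T \<and> list_all2 (\<lambda>D E. (D, E) \<in> S) Ds Es}"

lemma eval_closureI:
  "(X, Y) \<in> T \<Longrightarrow> list_all2 (\<lambda>D E. (D, E) \<in> S) Ds Es \<Longrightarrow> (efill Ds X, efill Es Y) \<in> eval_closure S T"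
  unfolding eval_closure_def by blast

lemma subset_eval_closure: "T \<subseteq> eval_closure S T"
  using eval_closureI[of _ _ T S "[]" "[]"] by auto

lemma eval_closure_converse: "eval_closure (S\<inverse>) (T\<inverse>) = (eval_closure S T)\<inverse>"
proof -
  have "list_all2 (\<lambda>D E. (D, E) \<in> S\<inverse>) Ds Es = list_all2 (\<lambda>D E. (D, E) \<in> S) Es Ds" for Ds Es
    by (auto simp: list_all2_conv_all_nth)
  then show ?thesis unfolding eval_closure_def by blast
qed

lemma closed_rel_eval_closure:
  assumes "closed_rel S" "closed_rel T"
  shows "closed_rel (eval_closure S T)"
  unfolding closed_rel_def eval_closure_def
proof clarify
  fix Ds Es X Y
  assume XY: "(X, Y) \<in> T" and args: "list_all2 (\<lambda>D E. (D, E) \<in> S) Ds Es"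
  have pair_closed: "closed D \<and> closed E" if "(D, E) \<in> S" for D E
    using that assms(1) by (auto simp: closed_rel_def)
  have "(\<forall>D\<in>set Ds. closed D) \<and> (\<forall>E\<in>set Es. closed E)"
    using args by (induction rule: list_all2_induct) (auto dest: pair_closed)
  with XY assms(2) show "closed (efill Ds X) \<and> closed (efill Es Y)"
    using closed_efill by (auto simp: closed_rel_def)
qed

lemma lb_progress_mono: "lb_progress R T X Y \<Longrightarrow> T \<subseteq> T' \<Longrightarrow> lb_progress R T' X Y"
  unfolding lb_progress_def by blast

text \<open>Idempotence of S handles the abstraction clause.\<close>
lemma lb_progress_efill:
  assumes prog: "lb_progress R T X Y"
    and args: "list_all2 (\<lambda>D E. (D, E) \<in> ctx_closure R) Ds Es"
  shows "lb_progress (ctx_closure R) (eval_closure (ctx_closure R) T) (efill Ds X) (efill Es Y)"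
  unfolding lb_progress_def
proof (intro conjI allI impI)
  fix Z assume "cbn (efill Ds X) Z"
  then consider (inner) X' where "cbn X X'" "Z = efill Ds X'"
    | (beta) M D Ds' where "Ds = D # Ds'" "X = Lam M" "Z = efill Ds' (subst M 0 D)"
    using cbn_efill_inv by blast
  then show "\<exists>N'. cbn_star (efill Es Y) N' \<and> (Z, N') \<in> eval_closure (ctx_closure R) T"
  proof cases
    case inner
    then obtain Y' where "cbn_star Y Y'" "(X', Y') \<in> T"
      using prog by (auto simp: lb_progress_def)
    then show ?thesis using inner args by (blast intro: eval_closureI cbn_star_efill)
  next
    case beta
    then obtain E Es' where E: "Es = E # Es'" "(D, E) \<in> ctx_closure R"
      "list_all2 (\<lambda>D E. (D, E) \<in> ctx_closure R) Ds' Es'"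
      using args by (cases Es) auto
    obtain N where "cbn_star Y (Lam N)" and "(subst M 0 D, subst N 0 E) \<in> T"
      using prog beta E(2) by (auto simp: lb_progress_def)
    then show ?thesis
      using beta E by (blast intro: eval_closureI cbn_star_efill_beta)
  qed
next
  fix M assume "efill Ds X = Lam M"
  then have "Ds = []" "Es = []" "X = Lam M" using efill_Lam args by auto
  then obtain N where "cbn_star Y (Lam N)"
    "\<forall>P Q. (P, Q) \<in> ctx_closure R \<longrightarrow> (subst M 0 P, subst N 0 Q) \<in> T"
    using prog by (auto simp: lb_progress_def)
  moreover have "ctx_closure (ctx_closure R) \<subseteq> ctx_closure R" "T \<subseteq> eval_closure (ctx_closure R) T"
    by (rule ctx_closure_idem subset_eval_closure)+
  ultimately show "\<exists>N. cbn_star (efill Es Y) (Lam N) \<and> (\<forall>P Q. (P, Q) \<in> ctx_closure (ctx_closure R)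
      \<longrightarrow> (subst M 0 P, subst N 0 Q) \<in> eval_closure (ctx_closure R) T)"
    unfolding \<open>Es = []\<close> efill_Nil by blast
qed

text \<open>Two related closed abstractions progress into the context closure: they do not reduce,
  and their bodies remain related after substituting related arguments.\<close>
lemma lb_progress_Lam:
  assumes "closed_rel R" "ctx_related R A B" "closed (Lam A)" "closed (Lam B)"
  shows "lb_progress R (ctx_closure R) (Lam A) (Lam B)"
  using assms ctx_closure_subst by (auto simp: lb_progress_def elim: cbn.cases)

definition up_to_ctx :: "(tm \<times> tm) set \<Rightarrow> (tm \<times> tm) set \<Rightarrow> (tm \<times> tm) set" where
  "up_to_ctx R1 R2 = eval_closure (ctx_closure R1) (R2 \<union> ctx_closure R1)"

lemma up_to_ctx_converse: "up_to_ctx (R1\<inverse>) (R2\<inverse>) = (up_to_ctx R1 R2)\<inverse>"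
  by (simp add: up_to_ctx_def ctx_closure_converse flip: eval_closure_converse converse_Un)

text \<open>It suffices to
  treat pairs of closed context-related terms, by induction on \<open>ctx_related\<close>: an application
  moves its argument into the evaluation context.\<close>
lemma up_to_ctx_progress:
  assumes closed: "closed_rel R1" and sub: "R1 \<subseteq> R2"
    and prog: "\<forall>(M, N) \<in> R2. lb_progress R1 R2 M N"
    and "(M, N) \<in> up_to_ctx R1 R2"
  shows "lb_progress (ctx_closure R1) (up_to_ctx R1 R2) M N"
proof -
  let ?args = "list_all2 (\<lambda>D E. (D, E) \<in> ctx_closure R1)"
  have from_R2: "lb_progress (ctx_closure R1) (up_to_ctx R1 R2) (efill Ds X) (efill Es Y)"
    if "(X, Y) \<in> R2" "?args Ds Es" for X Y Ds Es
    using lb_progress_efill[OF lb_progress_mono] prog that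
    unfolding up_to_ctx_def by blast
  have from_ctx: "lb_progress (ctx_closure R1) (up_to_ctx R1 R2) (efill Ds X) (efill Es Y)"
    if "ctx_related R1 X Y" "closed X" "closed Y" "?args Ds Es" for X Y Ds Es
    using that
  proof (induction arbitrary: Ds Es rule: ctx_related.induct)
    case (var i)
    then show ?case by (simp add: closed_def)
  next
    case (rel X Y)
    then show ?case using from_R2 sub by blast
  next
    case (app A B A' B')
    then have "(A', B') \<in> ctx_closure R1" "closed A" "closed B"
      by (auto simp: ctx_closure_iff closed_def)
    then have "lb_progress (ctx_closure R1) (up_to_ctx R1 R2) (efill (A' # Ds) A) (efill (B' # Es) B)"
      using app.IH(1) app.prems(3) by simp
    then show ?case by (simp add: efill_Cons)
  next
    case (lam A B)
    then show ?case
      using lb_progress_efill[OF lb_progress_mono[OF lb_progress_Lam]] closed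
      unfolding up_to_ctx_def by blast
  qed
  from \<open>(M, N) \<in> up_to_ctx R1 R2\<close> obtain Ds Es X Y where
    MN: "M = efill Ds X" "N = efill Es Y" and args: "?args Ds Es"
    and XY: "(X, Y) \<in> R2 \<or> (ctx_related R1 X Y \<and> closed X \<and> closed Y)"
    unfolding up_to_ctx_def eval_closure_def ctx_closure_iff[symmetric] by blast
  from XY show ?thesis
    unfolding MN using from_R2[OF _ args] from_ctx[OF _ _ _ args] by blast
qed

lemma coupled_lb_up_to_ctx:
  assumes "coupled_lb R1 R2"
  shows "coupled_lb (ctx_closure R1) (up_to_ctx R1 R2)"
proof -
  have R: "closed_rel R1" "closed_rel R2" "R1 \<subseteq> R2"
    "\<forall>(M, N) \<in> R2. lb_progress R1 R2 M N"
    "\<forall>(N, M) \<in> R2\<inverse>. lb_progress (R1\<inverse>) (R2\<inverse>) N M"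
    using assms by (auto simp: coupled_lb_def)
  have closed_conv: "closed_rel (R1\<inverse>)" using R(1) by (auto simp: closed_rel_def)
  have "closed_rel (up_to_ctx R1 R2)"
    unfolding up_to_ctx_def using R(2) closed_rel_ctx_closure[of R1]
    by (intro closed_rel_eval_closure) (auto simp: closed_rel_def)
  moreover have "ctx_closure R1 \<subseteq> up_to_ctx R1 R2"
    unfolding up_to_ctx_def using subset_eval_closure by blast
  moreover have "lb_progress (ctx_closure R1) (up_to_ctx R1 R2) M N"
    if "(M, N) \<in> up_to_ctx R1 R2" for M N
    using up_to_ctx_progress R that by blast
  moreover have "lb_progress ((ctx_closure R1)\<inverse>) ((up_to_ctx R1 R2)\<inverse>) N M"
    if "(M, N) \<in> up_to_ctx R1 R2" for M N
    using up_to_ctx_progress[OF closed_conv _ R(5), of N M] R(3) that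
    by (auto simp: ctx_closure_converse up_to_ctx_converse)
  ultimately show ?thesis
    using closed_rel_ctx_closure by (auto simp: coupled_lb_def)
qed

theorem mainTheorem7:
  shows "(\<forall>M N C. (M, N) \<in> bisim1 \<longrightarrow> closed (fill_all C M) \<longrightarrow> closed (fill_all C N)
            \<longrightarrow> (fill_all C M, fill_all C N) \<in> bisim1)
       \<and> (\<forall>E F Ms. (E, F) \<in> bisim2 \<longrightarrow> (\<forall>M \<in> set Ms. closed M)
            \<longrightarrow> (efill Ms E, efill Ms F) \<in> bisim2)"
proof (intro conjI allI impI)
  fix M N C
  assume "(M, N) \<in> bisim1" and closed: "closed (fill_all C M)" "closed (fill_all C N)"
  then obtain R1 R2 where R: "coupled_lb R1 R2" "(M, N) \<in> R1" by (auto simp: bisim1_def)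
  have "ctx_related R1 (fill_all C M) (fill_all C N)"
    unfolding fill_all_def using R(2) by (intro ctx_related_fill) auto
  then have "(fill_all C M, fill_all C N) \<in> ctx_closure R1"
    using closed by (simp add: ctx_closure_iff)
  then show "(fill_all C M, fill_all C N) \<in> bisim1"
    using coupled_lb_up_to_ctx[OF R(1)] unfolding bisim1_def by blast
next
  fix E F Ms
  assume "(E, F) \<in> bisim2" and args: "\<forall>M \<in> set Ms. closed M"
  then obtain R1 R2 where R: "coupled_lb R1 R2" "(E, F) \<in> R2" by (auto simp: bisim2_def)
  have "list_all2 (\<lambda>D E. (D, E) \<in> ctx_closure R1) Ms Ms"
    using args by (auto simp: list_all2_conv_all_nth ctx_closure_iff ctx_related_refl)
  then have "(efill Ms E, efill Ms F) \<in> up_to_ctx R1 R2"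
    using R(2) eval_closureI unfolding up_to_ctx_def by blast
  then show "(efill Ms E, efill Ms F) \<in> bisim2"
    using coupled_lb_up_to_ctx[OF R(1)] unfolding bisim2_def by blast
qed

end
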